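(* Let $(\mathfrak{g},[\cdot,\cdot]_{\mathfrak{g}},\phi_{\mathfrak{g}})$ and $(\mathfrak{g}^*,[\cdot,\cdot]_{\mathfrak{g}^*},\phi_{\mathfrak{g}}^* )$ be two weakly involutive Hom-Lie algebras ($\mathfrak g$ finite-dimensional). Then $(\mathfrak g,\mathfrak g^*;\mathrm{ad}^\circ,\mathfrak{ad}^\circ)$ is a matched pair of Hom-Lie algebras if and only if $\Delta[x,y]_{\mathfrak g}=\mathrm{ad}_{\phi_{\mathfrak g}(x)}\Delta(y)-\mathrm{ad}_{\phi_{\mathfrak g}(y)}\Delta(x)$ for all $x,y\in\mathfrak g$, where $\Delta:\mathfrak g\to\mathfrak g\otimes\mathfrak g$ is defined by $\langle\Delta(x),a\otimes b\rangle=\langle x,[a,b]_{\mathfrak g^*}\rangle$.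
   Context: A Hom-Lie algebra $(\mathfrak{h},[\cdot,\cdot]_{\mathfrak{h}},\phi_{\mathfrak{h}})$: skew-symmetric bilinear bracket and linear map with $\phi_{\mathfrak h}[x,y]=[\phi_{\mathfrak h}x,\phi_{\mathfrak h}y]$ and $[\phi_{\mathfrak h}(x),[y,z]]+[\phi_{\mathfrak h}(y),[z,x]]+[\phi_{\mathfrak h}(z),[x,y]]=0$; weakly involutive if $[\phi_{\mathfrak h}^2(x),y]=[x,y]$. A representation $(V,\beta,\rho)$: $\beta\in\mathfrak{gl}(V)$, $\rho:\mathfrak h\to\mathfrak{gl}(V)$ with $\rho(\phi_{\mathfrak h}(x))\beta=\beta\rho(x)$ and $\rho([x,y])\beta=\rho(\phi_{\mathfrak h}(x))\rho(y)-\rho(\phi_{\mathfrak h}(y))\rho(x)$. For $z\in\mathfrak g$, $t\in\mathfrak g\otimes\mathfrak g$: $\mathrm{ad}_zt=(\mathrm{ad}_z\otimes\phi_{\mathfrak g}+\phi_{\mathfrak g}\otimes\mathrm{ad}_z)t$, $\mathrm{ad}_zy=[z,y]_{\mathfrak g}$. $\mathrm{ad}^\circ:\mathfrak g\to\mathfrak{gl}(\mathfrak g^* )$, $\langle\mathrm{ad}^\circ_xa,y\rangle=-\langle a,[\phi_{\mathfrak g}(x),y]_{\mathfrak g}\rangle$; $\mathfrak{ad}^\circ:\mathfrak g^*\to\mathfrak{gl}(\mathfrak g)$, $\langle\mathfrak{ad}^\circ_ax,b\rangle=-\langle x,[\phi_{\mathfrak g}^*(a),b]_{\mathfrak g^*}\rangle$.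 A matched pair $(\mathfrak g,\mathfrak g';\rho,\rho')$ of Hom-Lie algebras: Hom-Lie algebras $\mathfrak g,\mathfrak g'$, a representation $(\mathfrak g',\phi_{\mathfrak g'},\rho)$ of $\mathfrak g$ and a representation $(\mathfrak g,\phi_{\mathfrak g},\rho')$ of $\mathfrak g'$ with, for all $x,y\in\mathfrak g$, $x',y'\in\mathfrak g'$: $\rho'(\phi_{\mathfrak g'}(x'))[x,y]_{\mathfrak g}=[\rho'(x')x,\phi_{\mathfrak g}(y)]_{\mathfrak g}+[\phi_{\mathfrak g}(x),\rho'(x')y]_{\mathfrak g}+\rho'(\rho(y)x')\phi_{\mathfrak g}(x)-\rho'(\rho(x)x')\phi_{\mathfrak g}(y)$ and $\rho(\phi_{\mathfrak g}(x))[x',y']_{\mathfrak g'}=[\rho(x)x',\phi_{\mathfrak g'}(y')]_{\mathfrak g'}+[\phi_{\mathfrak g'}(x'),\rho(x)y']_{\mathfrak g'}+\rho(\rho'(y')x)\phi_{\mathfrak g'}(x')-\rho(\rho'(x')x)\phi_{\mathfrak g'}(y')$. *)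

theory Defs
  imports Main
begin

text \<open>Coordinate model: a finite-dimensional space over a field 'k with a basis indexed
by a finite type 'i is the function space 'i => 'k.  The dual space g* is again 'i => 'k,
with the canonical pairing; g (x) g is ('i * 'i) => 'k.\<close>

definition vadd :: "('i \<Rightarrow> 'k::field) \<Rightarrow> ('i \<Rightarrow> 'k) \<Rightarrow> ('i \<Rightarrow> 'k)" where
  "vadd x y = (\<lambda>i. x i + y i)"

definition vsub :: "('i \<Rightarrow> 'k::field) \<Rightarrow> ('i \<Rightarrow> 'k) \<Rightarrow> ('i \<Rightarrow> 'k)" where
  "vsub x y = (\<lambda>i. x i - y i)"

definition vneg :: "('i \<Rightarrow> 'k::field) \<Rightarrow> ('i \<Rightarrow> 'k)" where
  "vneg x = (\<lambda>i. - x i)"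

definition smul :: "'k::field \<Rightarrow> ('i \<Rightarrow> 'k) \<Rightarrow> ('i \<Rightarrow> 'k)" where
  "smul c x = (\<lambda>i. c * x i)"

definition basis_vec :: "'i \<Rightarrow> ('i \<Rightarrow> 'k::field)" where
  "basis_vec i = (\<lambda>j. if j = i then 1 else 0)"

definition pair :: "('i::finite \<Rightarrow> 'k::field) \<Rightarrow> ('i \<Rightarrow> 'k) \<Rightarrow> 'k" where
  "pair x a = (\<Sum>i\<in>UNIV. x i * a i)"

definition lin_map :: "(('i \<Rightarrow> 'k::field) \<Rightarrow> ('j \<Rightarrow> 'k)) \<Rightarrow> bool" where
  "lin_map f \<longleftrightarrow> (\<forall>x y. f (vadd x y) = vadd (f x) (f y)) \<and> (\<forall>c x. f (smul c x) = smul c (f x))"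

definition bilin :: "(('i \<Rightarrow> 'k::field) \<Rightarrow> ('i \<Rightarrow> 'k) \<Rightarrow> ('i \<Rightarrow> 'k)) \<Rightarrow> bool" where
  "bilin br \<longleftrightarrow> (\<forall>x. lin_map (br x)) \<and> (\<forall>y. lin_map (\<lambda>x. br x y))"

definition hom_lie :: "(('i \<Rightarrow> 'k::field) \<Rightarrow> ('i \<Rightarrow> 'k) \<Rightarrow> ('i \<Rightarrow> 'k)) \<Rightarrow> (('i \<Rightarrow> 'k) \<Rightarrow> ('i \<Rightarrow> 'k)) \<Rightarrow> bool" where
  "hom_lie br \<phi> \<longleftrightarrow> bilin br \<and> lin_map \<phi> \<and> (\<forall>x y. br x y = vneg (br y x))
     \<and> (\<forall>x y. \<phi> (br x y) = br (\<phi> x) (\<phi> y))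
     \<and> (\<forall>x y z. vadd (vadd (br (\<phi> x) (br y z)) (br (\<phi> y) (br z x))) (br (\<phi> z) (br x y))
                 = (\<lambda>_. 0))"

definition weakly_involutive :: "(('i \<Rightarrow> 'k::field) \<Rightarrow> ('i \<Rightarrow> 'k) \<Rightarrow> ('i \<Rightarrow> 'k)) \<Rightarrow> (('i \<Rightarrow> 'k) \<Rightarrow> ('i \<Rightarrow> 'k)) \<Rightarrow> bool" where
  "weakly_involutive br \<phi> \<longleftrightarrow> (\<forall>x y. br (\<phi> (\<phi> x)) y = br x y)"

definition hom_rep :: "(('i \<Rightarrow> 'k::field) \<Rightarrow> ('i \<Rightarrow> 'k) \<Rightarrow> ('i \<Rightarrow> 'k)) \<Rightarrow> (('i \<Rightarrow> 'k) \<Rightarrow> ('i \<Rightarrow> 'k))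
     \<Rightarrow> (('j \<Rightarrow> 'k) \<Rightarrow> ('j \<Rightarrow> 'k)) \<Rightarrow> (('i \<Rightarrow> 'k) \<Rightarrow> ('j \<Rightarrow> 'k) \<Rightarrow> ('j \<Rightarrow> 'k)) \<Rightarrow> bool" where
  "hom_rep br \<phi> \<beta> \<rho> \<longleftrightarrow> lin_map \<beta> \<and> (\<forall>x y v. \<rho> (vadd x y) v = vadd (\<rho> x v) (\<rho> y v)) \<and> (\<forall>c x v. \<rho> (smul c x) v = smul c (\<rho> x v)) \<and> (\<forall>x. lin_map (\<rho> x))
     \<and> (\<forall>x v. \<rho> (\<phi> x) (\<beta> v) = \<beta> (\<rho> x v))
     \<and> (\<forall>x y v. \<rho> (br x y) (\<beta> v) = vsub (\<rho> (\<phi> x) (\<rho> y v)) (\<rho> (\<phi> y) (\<rho> x v)))"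

definition matched_pair ::
  "(('i \<Rightarrow> 'k::field) \<Rightarrow> ('i \<Rightarrow> 'k) \<Rightarrow> ('i \<Rightarrow> 'k)) \<Rightarrow> (('i \<Rightarrow> 'k) \<Rightarrow> ('i \<Rightarrow> 'k))
   \<Rightarrow> (('j \<Rightarrow> 'k) \<Rightarrow> ('j \<Rightarrow> 'k) \<Rightarrow> ('j \<Rightarrow> 'k)) \<Rightarrow> (('j \<Rightarrow> 'k) \<Rightarrow> ('j \<Rightarrow> 'k))
   \<Rightarrow> (('i \<Rightarrow> 'k) \<Rightarrow> ('j \<Rightarrow> 'k) \<Rightarrow> ('j \<Rightarrow> 'k)) \<Rightarrow> (('j \<Rightarrow> 'k) \<Rightarrow> ('i \<Rightarrow> 'k) \<Rightarrow> ('i \<Rightarrow> 'k)) \<Rightarrow> bool" where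
  "matched_pair br \<phi> br' \<phi>' \<rho> \<rho>' \<longleftrightarrow>
     hom_lie br \<phi> \<and> hom_lie br' \<phi>' \<and> hom_rep br \<phi> \<phi>' \<rho> \<and> hom_rep br' \<phi>' \<phi> \<rho>'
     \<and> (\<forall>x y x'. \<rho>' (\<phi>' x') (br x y) =
          vsub (vadd (vadd (br (\<rho>' x' x) (\<phi> y)) (br (\<phi> x) (\<rho>' x' y))) (\<rho>' (\<rho> y x') (\<phi> x)))
               (\<rho>' (\<rho> x x') (\<phi> y)))
     \<and> (\<forall>x x' y'. \<rho> (\<phi> x) (br' x' y') =
          vsub (vadd (vadd (br' (\<rho> x x') (\<phi>' y')) (br' (\<phi>' x') (\<rho> x y'))) (\<rho> (\<rho>' y' x) (\<phi>' x')))
               (\<rho> (\<rho>' x' x) (\<phi>' y')))"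

text \<open>Dual map f*: <f* a, x> = <a, f x>.\<close>
definition dual_map :: "(('i::finite \<Rightarrow> 'k::field) \<Rightarrow> ('i \<Rightarrow> 'k)) \<Rightarrow> ('i \<Rightarrow> 'k) \<Rightarrow> ('i \<Rightarrow> 'k)" where
  "dual_map f a = (\<lambda>i. pair (f (basis_vec i)) a)"

text \<open>ad-circ: <ad_x a, y> = - <a, [phi x, y]>.\<close>
definition ad_circ :: "(('i::finite \<Rightarrow> 'k::field) \<Rightarrow> ('i \<Rightarrow> 'k) \<Rightarrow> ('i \<Rightarrow> 'k)) \<Rightarrow> (('i \<Rightarrow> 'k) \<Rightarrow> ('i \<Rightarrow> 'k))
     \<Rightarrow> ('i \<Rightarrow> 'k) \<Rightarrow> ('i \<Rightarrow> 'k) \<Rightarrow> ('i \<Rightarrow> 'k)" where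
  "ad_circ br \<phi> x a = (\<lambda>i. - pair (br (\<phi> x) (basis_vec i)) a)"

text \<open>frak-ad-circ: <ad_a x, b> = - <x, [phi* a, b]_*>.\<close>
definition ad_circ_dual :: "(('i::finite \<Rightarrow> 'k::field) \<Rightarrow> ('i \<Rightarrow> 'k) \<Rightarrow> ('i \<Rightarrow> 'k)) \<Rightarrow> (('i \<Rightarrow> 'k) \<Rightarrow> ('i \<Rightarrow> 'k))
     \<Rightarrow> ('i \<Rightarrow> 'k) \<Rightarrow> ('i \<Rightarrow> 'k) \<Rightarrow> ('i \<Rightarrow> 'k)" where
  "ad_circ_dual brd \<phi> a x = (\<lambda>i. - pair x (brd (dual_map \<phi> a) (basis_vec i)))"

text \<open>Tensors in g (x) g as coefficient arrays; (A (x) B) for linear maps A, B.\<close>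
definition tensor_map :: "(('i::finite \<Rightarrow> 'k::field) \<Rightarrow> ('i \<Rightarrow> 'k)) \<Rightarrow> (('i \<Rightarrow> 'k) \<Rightarrow> ('i \<Rightarrow> 'k))
     \<Rightarrow> ('i \<times> 'i \<Rightarrow> 'k) \<Rightarrow> ('i \<times> 'i \<Rightarrow> 'k)" where
  "tensor_map A B t = (\<lambda>(i, j). \<Sum>k\<in>UNIV. \<Sum>l\<in>UNIV. A (basis_vec k) i * B (basis_vec l) j * t (k, l))"

definition ad_tensor :: "(('i::finite \<Rightarrow> 'k::field) \<Rightarrow> ('i \<Rightarrow> 'k) \<Rightarrow> ('i \<Rightarrow> 'k)) \<Rightarrow> (('i \<Rightarrow> 'k) \<Rightarrow> ('i \<Rightarrow> 'k))
     \<Rightarrow> ('i \<Rightarrow> 'k) \<Rightarrow> ('i \<times> 'i \<Rightarrow> 'k) \<Rightarrow> ('i \<times> 'i \<Rightarrow> 'k)" where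
  "ad_tensor br \<phi> z t = (\<lambda>p. tensor_map (br z) \<phi> t p + tensor_map \<phi> (br z) t p)"

text \<open>Delta: <Delta x, a (x) b> = <x, [a, b]_*>, i.e. Delta x (i,j) = <x, [e_i, e_j]_*>.\<close>
definition Delta :: "(('i::finite \<Rightarrow> 'k::field) \<Rightarrow> ('i \<Rightarrow> 'k) \<Rightarrow> ('i \<Rightarrow> 'k)) \<Rightarrow> ('i \<Rightarrow> 'k) \<Rightarrow> ('i \<times> 'i \<Rightarrow> 'k)" where
  "Delta brd x = (\<lambda>(i, j). pair x (brd (basis_vec i) (basis_vec j)))"

end

theory Submission
  imports Defs
begin

(* For a weakly involutive Hom-Lie algebra g with twist \<phi>, the coadjoint map ad\<degree> is automatically a
   representation on g* with twist \<phi>*: read through the pairing, its two axioms are the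
   multiplicativity of \<phi> and the Hom-Jacobi identity, once weak involutivity removes the \<phi>\<phi> that
   appears.  The map ad\<degree> of the dual algebra g* is the same construction for the twist \<phi>*, and
   \<phi>** = \<phi>, so both representation axioms of a matched pair hold for free.  Pairing the two
   remaining compatibility conditions with b \<in> g* and with y \<in> g respectively and moving every
   operator across the pairing turns both into one scalar identity,
     \<langle>[x,y], [a,b]\<rangle> = \<langle>ad_\<phi>(x) \<Delta>(y) - ad_\<phi>(y) \<Delta>(x), a \<otimes> b\<rangle>,
   which is the cocycle condition on \<Delta> paired with a \<otimes> b. *)

lemma pair_vadd_left: "pair (vadd x y) a = pair x a + pair y a"
  by (simp add: pair_def vadd_def sum.distrib distrib_right)

lemma pair_vadd_right: "pair x (vadd a b) = pair x a + pair x b"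
  by (simp add: pair_def vadd_def sum.distrib distrib_left)

lemma pair_smul_left: "pair (smul c x) a = c * pair x a"
  by (simp add: pair_def smul_def sum_distrib_left mult.assoc)

lemma pair_smul_right: "pair x (smul c a) = c * pair x a"
  by (simp add: pair_def smul_def sum_distrib_left mult.left_commute)

lemma pair_vneg_left: "pair (vneg x) a = - pair x a"
  by (simp add: pair_def vneg_def sum_negf)

lemma pair_vneg_right: "pair x (vneg a) = - pair x a"
  by (simp add: pair_def vneg_def sum_negf)

lemma pair_vsub_left: "pair (vsub x y) a = pair x a - pair y a"
  by (simp add: pair_def vsub_def sum_subtractf left_diff_distrib)

lemma pair_vsub_right: "pair x (vsub a b) = pair x a - pair x b"
  by (simp add: pair_def vsub_def sum_subtractf right_diff_distrib)

lemma pair_basis_vec_left: "pair (basis_vec i) a = a i"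
proof -
  have "pair (basis_vec i) a = (\<Sum>j\<in>UNIV. if j = i then a j else 0)"
    unfolding pair_def basis_vec_def by (rule sum.cong) auto
  then show ?thesis by simp
qed

lemma pair_commute: "pair x a = pair a x"
  by (simp add: pair_def mult.commute)

lemma pair_basis_vec_right: "pair x (basis_vec i) = x i"
  by (subst pair_commute) (rule pair_basis_vec_left)

lemma pair_zero_left: "pair (\<lambda>_. 0) a = 0"
  by (simp add: pair_def)

lemmas pair_simps = pair_vadd_left pair_vadd_right pair_smul_left pair_smul_right
  pair_vneg_left pair_vneg_right pair_vsub_left pair_vsub_right pair_zero_left

lemma pair_left_eqI: "(\<And>a. pair x a = pair y a) \<Longrightarrow> x = y"
  by (metis pair_basis_vec_right ext)

lemma pair_right_eqI: "(\<And>x. pair x a = pair x b) \<Longrightarrow> a = b"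
  by (metis pair_basis_vec_left ext)

lemma eq_iff_pair_left: "x = y \<longleftrightarrow> (\<forall>a. pair x a = pair y a)"
  by (auto intro: pair_left_eqI)

lemma eq_iff_pair_right: "a = b \<longleftrightarrow> (\<forall>x. pair x a = pair x b)"
  by (auto intro: pair_right_eqI)

lemma linear_form_expansion:
  fixes f :: "('i::finite \<Rightarrow> 'k::field) \<Rightarrow> 'k"
  assumes add: "\<And>u v. f (vadd u v) = f u + f v" and smul: "\<And>c u. f (smul c u) = c * f u"
  shows "f x = (\<Sum>i\<in>UNIV. x i * f (basis_vec i))"
proof -
  have partial: "f (\<lambda>j. \<Sum>i\<in>A. x i * basis_vec i j) = (\<Sum>i\<in>A. x i * f (basis_vec i))"
    if "finite A" for A
    using that
  proof (induction A rule: finite_induct)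
    case empty
    have "f (smul 0 (\<lambda>_. 0)) = 0" by (simp add: smul)
    then show ?case by (simp add: smul_def)
  next
    case (insert i A)
    have "(\<lambda>j. \<Sum>i\<in>insert i A. x i * basis_vec i j)
        = vadd (smul (x i) (basis_vec i)) (\<lambda>j. \<Sum>i\<in>A. x i * basis_vec i j)"
      using insert.hyps by (simp add: vadd_def smul_def)
    then show ?case using insert by (simp add: add smul)
  qed
  have "x = (\<lambda>j. \<Sum>i\<in>UNIV. x i * basis_vec i j)"
    by (simp add: basis_vec_def if_distrib cong: if_cong)
  then show ?thesis using partial[of UNIV] by simp
qed

lemma lin_map_vadd: "lin_map f \<Longrightarrow> f (vadd x y) = vadd (f x) (f y)"
  by (simp add: lin_map_def)

lemma lin_map_smul: "lin_map f \<Longrightarrow> f (smul c x) = smul c (f x)"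
  by (simp add: lin_map_def)

lemma lin_map_vneg:
  assumes "lin_map f"
  shows "f (vneg x) = vneg (f x)"
proof -
  have "vneg x = smul (-1) x" "vneg (f x) = smul (-1) (f x)"
    by (simp_all add: vneg_def smul_def)
  with assms show ?thesis by (simp add: lin_map_smul)
qed

lemma pair_lin_map_expansion:
  fixes f :: "('i::finite \<Rightarrow> 'k::field) \<Rightarrow> ('j::finite \<Rightarrow> 'k)"
  assumes "lin_map f"
  shows "pair y (f x) = (\<Sum>i\<in>UNIV. x i * pair y (f (basis_vec i)))"
  using assms by (intro linear_form_expansion) (simp_all add: lin_map_def pair_simps)

lemma pair_dual_map:
  assumes "lin_map f"
  shows "pair x (dual_map f a) = pair (f x) a"
proof -
  have "pair (f x) a = pair a (f x)" by (rule pair_commute)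
  also have "\<dots> = (\<Sum>i\<in>UNIV. x i * pair a (f (basis_vec i)))"
    using assms by (rule pair_lin_map_expansion)
  also have "\<dots> = pair x (dual_map f a)"
    by (simp add: pair_def dual_map_def mult.commute)
  finally show ?thesis by simp
qed

lemma lin_map_dual_map: "lin_map (dual_map f)"
  unfolding lin_map_def dual_map_def by (simp add: pair_simps) (simp add: vadd_def smul_def)

lemma dual_map_dual_map:
  assumes "lin_map f"
  shows "dual_map (dual_map f) = f"
proof (intro ext)
  fix x i
  have "dual_map (dual_map f) x i = pair x (dual_map f (basis_vec i))"
    by (simp add: dual_map_def pair_commute)
  also have "\<dots> = f x i"
    using assms by (simp add: pair_dual_map pair_basis_vec_right)
  finally show "dual_map (dual_map f) x i = f x i" .
qed

lemma bilin_left: "bilin br \<Longrightarrow> lin_map (\<lambda>x. br x y)"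
  by (simp add: bilin_def)

lemma bilin_right: "bilin br \<Longrightarrow> lin_map (br x)"
  by (simp add: bilin_def)

lemma hom_lie_bilin: "hom_lie br \<phi> \<Longrightarrow> bilin br"
  unfolding hom_lie_def by blast

lemma hom_lie_lin_map: "hom_lie br \<phi> \<Longrightarrow> lin_map \<phi>"
  unfolding hom_lie_def by blast

lemma hom_lie_skew: "hom_lie br \<phi> \<Longrightarrow> br x y = vneg (br y x)"
  unfolding hom_lie_def by blast

lemma hom_lie_multiplicative: "hom_lie br \<phi> \<Longrightarrow> \<phi> (br x y) = br (\<phi> x) (\<phi> y)"
  unfolding hom_lie_def by blast

lemma hom_lie_jacobi:
  "hom_lie br \<phi> \<Longrightarrow>
     vadd (vadd (br (\<phi> x) (br y z)) (br (\<phi> y) (br z x))) (br (\<phi> z) (br x y)) = (\<lambda>_. 0)"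
  unfolding hom_lie_def by blast

lemma weakly_involutiveD: "weakly_involutive br \<phi> \<Longrightarrow> br (\<phi> (\<phi> x)) y = br x y"
  by (simp add: weakly_involutive_def)

lemma dual_map_bracket_eq_ad_circ: "dual_map (br (\<phi> x)) a = vneg (ad_circ br \<phi> x a)"
  by (simp add: ad_circ_def vneg_def dual_map_def)

lemma pair_ad_circ:
  assumes "bilin br"
  shows "pair y (ad_circ br \<phi> x a) = - pair (br (\<phi> x) y) a"
  using pair_dual_map[OF bilin_right[OF assms], of y "\<phi> x" a]
  by (simp add: dual_map_bracket_eq_ad_circ pair_vneg_right minus_equation_iff)

lemma pair_ad_circ_phi:
  "bilin br \<Longrightarrow> weakly_involutive br \<phi> \<Longrightarrow> pair y (ad_circ br \<phi> (\<phi> x) a) = - pair (br x y) a"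
  by (simp add: pair_ad_circ weakly_involutiveD)

lemma pair_ad_circ_dual_map:
  assumes "hom_lie br \<phi>" and "weakly_involutive br \<phi>"
  shows "pair y (ad_circ br \<phi> x (dual_map \<phi> a)) = - pair (br x (\<phi> y)) a"
proof -
  have "pair y (ad_circ br \<phi> x (dual_map \<phi> a)) = - pair (\<phi> (br (\<phi> x) y)) a"
    using assms by (simp add: pair_ad_circ hom_lie_bilin pair_dual_map hom_lie_lin_map)
  also have "\<phi> (br (\<phi> x) y) = br x (\<phi> y)"
    using assms by (simp add: hom_lie_multiplicative weakly_involutiveD)
  finally show ?thesis .
qed

lemma ad_circ_dual_eq_ad_circ: "ad_circ_dual brd \<phi> = ad_circ brd (dual_map \<phi>)"
  unfolding ad_circ_dual_def ad_circ_def by (simp only: pair_commute[of _ "brd _ _"])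

lemma ad_circ_bracket:
  assumes hl: "hom_lie br \<phi>" and wi: "weakly_involutive br \<phi>"
  shows "ad_circ br \<phi> (br x y) (dual_map \<phi> v)
    = vsub (ad_circ br \<phi> (\<phi> x) (ad_circ br \<phi> y v)) (ad_circ br \<phi> (\<phi> y) (ad_circ br \<phi> x v))"
    (is "?lhs = ?rhs")
proof (rule pair_right_eqI)
  fix z
  have b: "bilin br" using hl by (rule hom_lie_bilin)
  have jacobi: "pair (br (\<phi> x) (br y z)) v - pair (br (\<phi> y) (br x z)) v
      + pair (br (\<phi> z) (br x y)) v = 0"
    using arg_cong[OF hom_lie_jacobi[OF hl, of x y z], of "\<lambda>w. pair w v"]
    by (simp add: hom_lie_skew[OF hl, of z x] lin_map_vneg[OF bilin_right[OF b]] pair_simps)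
  have "pair z ?lhs = - pair (br (br x y) (\<phi> z)) v"
    using hl wi by (rule pair_ad_circ_dual_map)
  also have "\<dots> = pair (br (\<phi> z) (br x y)) v"
    by (subst hom_lie_skew[OF hl]) (simp add: pair_simps)
  also have "\<dots> = pair (br (\<phi> y) (br x z)) v - pair (br (\<phi> x) (br y z)) v"
    using jacobi by (simp add: algebra_simps eq_neg_iff_add_eq_0)
  also have "\<dots> = pair z ?rhs"
    using b wi by (simp add: pair_ad_circ_phi pair_ad_circ pair_simps)
  finally show "pair z ?lhs = pair z ?rhs" .
qed

lemma hom_rep_ad_circ:
  assumes hl: "hom_lie br \<phi>" and wi: "weakly_involutive br \<phi>"
  shows "hom_rep br \<phi> (dual_map \<phi>) (ad_circ br \<phi>)"
proof -
  have b: "bilin br" and lin: "lin_map \<phi>"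
    using hl by (rule hom_lie_bilin, rule hom_lie_lin_map)
  note pair_ad = pair_ad_circ[OF b]
  have "ad_circ br \<phi> (vadd x y) v = vadd (ad_circ br \<phi> x v) (ad_circ br \<phi> y v)" for x y v
    by (rule pair_right_eqI)
       (simp add: pair_ad lin_map_vadd[OF lin] lin_map_vadd[OF bilin_left[OF b]] pair_simps)
  moreover have "ad_circ br \<phi> (smul c x) v = smul c (ad_circ br \<phi> x v)" for c x v
    by (rule pair_right_eqI)
       (simp add: pair_ad lin_map_smul[OF lin] lin_map_smul[OF bilin_left[OF b]] pair_simps)
  moreover have "lin_map (ad_circ br \<phi> x)" for x
    unfolding lin_map_def by (auto intro!: pair_right_eqI simp: pair_ad pair_simps)
  moreover have "ad_circ br \<phi> (\<phi> x) (dual_map \<phi> v) = dual_map \<phi> (ad_circ br \<phi> x v)" for x v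
    by (rule pair_right_eqI)
       (simp add: pair_ad_circ_phi[OF b wi] pair_dual_map[OF lin] pair_ad
         hom_lie_multiplicative[OF hl] weakly_involutiveD[OF wi])
  ultimately show ?thesis
    unfolding hom_rep_def using lin_map_dual_map ad_circ_bracket[OF hl wi] by blast
qed

definition tensor_pair ::
    "('i::finite \<times> 'i \<Rightarrow> 'k::field) \<Rightarrow> ('i \<Rightarrow> 'k) \<Rightarrow> ('i \<Rightarrow> 'k) \<Rightarrow> 'k" where
  "tensor_pair t a b = (\<Sum>i\<in>UNIV. \<Sum>j\<in>UNIV. t (i, j) * a i * b j)"

lemma tensor_pair_eq_pair: "tensor_pair t a b = pair a (\<lambda>i. pair (\<lambda>j. t (i, j)) b)"
  by (simp add: tensor_pair_def pair_def sum_distrib_left mult_ac)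

lemma tensor_pair_basis_vec: "tensor_pair t (basis_vec i) (basis_vec j) = t (i, j)"
  by (simp add: tensor_pair_eq_pair pair_basis_vec_left pair_basis_vec_right)

lemma tensor_eq_iff: "s = t \<longleftrightarrow> (\<forall>a b. tensor_pair s a b = tensor_pair t a b)"
  by (metis tensor_pair_basis_vec surj_pair ext)

lemma tensor_pair_diff: "tensor_pair (\<lambda>p. s p - t p) a b = tensor_pair s a b - tensor_pair t a b"
  by (simp add: tensor_pair_def algebra_simps sum_subtractf)

lemma tensor_pair_add: "tensor_pair (\<lambda>p. s p + t p) a b = tensor_pair s a b + tensor_pair t a b"
  by (simp add: tensor_pair_def algebra_simps sum.distrib)

lemma tensor_pair_tensor_map:
  "tensor_pair (tensor_map A B t) a b = tensor_pair t (dual_map A a) (dual_map B b)"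
  by (simp add: tensor_pair_def tensor_map_def dual_map_def pair_def sum_distrib_left
      sum_distrib_right mult_ac sum.cartesian_product)
    (rule sum.reindex_bij_witness[where i="\<lambda>(i, j, k, l). (k, l, i, j)"
                                    and j="\<lambda>(i, j, k, l). (k, l, i, j)"], auto)

lemma tensor_pair_ad_tensor:
  "tensor_pair (ad_tensor br \<phi> z t) a b
    = tensor_pair t (dual_map (br z) a) (dual_map \<phi> b)
      + tensor_pair t (dual_map \<phi> a) (dual_map (br z) b)"
  unfolding ad_tensor_def tensor_pair_add tensor_pair_tensor_map ..

lemma tensor_pair_Delta:
  assumes "bilin br"
  shows "tensor_pair (Delta br x) a b = pair x (br a b)"
proof -
  have "pair x (br a b) = (\<Sum>i\<in>UNIV. a i * pair x (br (basis_vec i) b))"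
    using bilin_left[OF assms] by (rule pair_lin_map_expansion)
  also have "\<dots> = (\<Sum>i\<in>UNIV. a i * (\<Sum>j\<in>UNIV. b j * pair x (br (basis_vec i) (basis_vec j))))"
    by (subst pair_lin_map_expansion[OF bilin_right[OF assms]]) (rule refl)
  also have "\<dots> = tensor_pair (Delta br x) a b"
    by (simp add: tensor_pair_def Delta_def sum_distrib_left mult_ac)
  finally show ?thesis by simp
qed

locale dual_hom_lie_pair =
  fixes brg :: "('i::finite \<Rightarrow> 'k::field) \<Rightarrow> ('i \<Rightarrow> 'k) \<Rightarrow> ('i \<Rightarrow> 'k)"
    and \<phi> :: "('i \<Rightarrow> 'k) \<Rightarrow> ('i \<Rightarrow> 'k)"
    and brd :: "('i \<Rightarrow> 'k) \<Rightarrow> ('i \<Rightarrow> 'k) \<Rightarrow> ('i \<Rightarrow> 'k)"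
  assumes hom_lie_g: "hom_lie brg \<phi>"
    and involutive_g: "weakly_involutive brg \<phi>"
    and hom_lie_d: "hom_lie brd (dual_map \<phi>)"
    and involutive_d: "weakly_involutive brd (dual_map \<phi>)"
begin

abbreviation \<psi> :: "('i \<Rightarrow> 'k) \<Rightarrow> ('i \<Rightarrow> 'k)"
  where "\<psi> \<equiv> dual_map \<phi>"

abbreviation ad :: "('i \<Rightarrow> 'k) \<Rightarrow> ('i \<Rightarrow> 'k) \<Rightarrow> ('i \<Rightarrow> 'k)"
  where "ad \<equiv> ad_circ brg \<phi>"

abbreviation coad :: "('i \<Rightarrow> 'k) \<Rightarrow> ('i \<Rightarrow> 'k) \<Rightarrow> ('i \<Rightarrow> 'k)"
  where "coad \<equiv> ad_circ_dual brd \<phi>"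

lemma bilin_g: "bilin brg"
  using hom_lie_g by (rule hom_lie_bilin)

lemma bilin_d: "bilin brd"
  using hom_lie_d by (rule hom_lie_bilin)

lemma dual_map_\<psi>: "dual_map \<psi> = \<phi>"
  using hom_lie_g by (simp add: hom_lie_lin_map dual_map_dual_map)

lemma coad_eq_ad_circ: "coad = ad_circ brd \<psi>"
  by (rule ad_circ_dual_eq_ad_circ)

lemma hom_rep_ad: "hom_rep brg \<phi> \<psi> ad"
  using hom_lie_g involutive_g by (rule hom_rep_ad_circ)

lemma hom_rep_coad: "hom_rep brd \<psi> \<phi> coad"
  using hom_rep_ad_circ[OF hom_lie_d involutive_d] by (simp add: dual_map_\<psi> coad_eq_ad_circ)

lemma pair_ad: "pair y (ad x a) = - pair (brg (\<phi> x) y) a"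
  using bilin_g by (rule pair_ad_circ)

lemma pair_ad_\<psi>: "pair y (ad x (\<psi> a)) = - pair (brg x (\<phi> y)) a"
  using hom_lie_g involutive_g by (rule pair_ad_circ_dual_map)

lemma pair_coad: "pair (coad a x) b = - pair x (brd (\<psi> a) b)"
  using pair_ad_circ[OF bilin_d, of b "\<psi>" a x] by (simp add: coad_eq_ad_circ pair_commute)

lemma pair_coad_\<phi>: "pair (coad a (\<phi> x)) b = - pair x (brd a (\<psi> b))"
  using pair_ad_circ_dual_map[OF hom_lie_d involutive_d, of b a x]
  by (simp add: dual_map_\<psi> coad_eq_ad_circ pair_commute)

definition ad_Delta_pairing ::
    "('i \<Rightarrow> 'k) \<Rightarrow> ('i \<Rightarrow> 'k) \<Rightarrow> ('i \<Rightarrow> 'k) \<Rightarrow> ('i \<Rightarrow> 'k) \<Rightarrow> 'k" where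
  "ad_Delta_pairing x y a b = - pair y (brd (ad x a) (\<psi> b)) - pair y (brd (\<psi> a) (ad x b))"

definition cocycle_identity :: bool where
  "cocycle_identity \<longleftrightarrow>
     (\<forall>x y a b. pair (brg x y) (brd a b) = ad_Delta_pairing x y a b - ad_Delta_pairing y x a b)"

lemma tensor_pair_ad_tensor_Delta:
  "tensor_pair (ad_tensor brg \<phi> (\<phi> x) (Delta brd y)) a b = ad_Delta_pairing x y a b"
  by (simp add: tensor_pair_ad_tensor tensor_pair_Delta[OF bilin_d] dual_map_bracket_eq_ad_circ
      lin_map_vneg[OF bilin_left[OF bilin_d]] lin_map_vneg[OF bilin_right[OF bilin_d]]
      pair_vneg_right ad_Delta_pairing_def)

lemma Delta_cocycle_iff:
  "(\<forall>x y. Delta brd (brg x y) =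
      (\<lambda>p. ad_tensor brg \<phi> (\<phi> x) (Delta brd y) p - ad_tensor brg \<phi> (\<phi> y) (Delta brd x) p))
   \<longleftrightarrow> cocycle_identity"
  by (simp add: tensor_eq_iff tensor_pair_diff tensor_pair_Delta[OF bilin_d]
      tensor_pair_ad_tensor_Delta cocycle_identity_def)

lemma pair_brg_\<phi>: "pair (brg w (\<phi> y)) b = pair w (ad y b)"
  by (subst hom_lie_skew[OF hom_lie_g]) (simp add: pair_vneg_left pair_ad)

lemma coad_condition_iff:
  "(\<forall>x y a. coad (\<psi> a) (brg x y) =
      vsub (vadd (vadd (brg (coad a x) (\<phi> y)) (brg (\<phi> x) (coad a y))) (coad (ad y a) (\<phi> x)))
           (coad (ad x a) (\<phi> y)))
   \<longleftrightarrow> cocycle_identity"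
proof -
  have lhs: "pair (coad (\<psi> a) (brg x y)) b = - pair (brg x y) (brd a b)" for x y a b
    using involutive_d by (simp add: pair_coad weakly_involutiveD)
  have rhs: "pair (vsub (vadd (vadd (brg (coad a x) (\<phi> y)) (brg (\<phi> x) (coad a y)))
                               (coad (ad y a) (\<phi> x)))
                         (coad (ad x a) (\<phi> y))) b
      = - (ad_Delta_pairing x y a b - ad_Delta_pairing y x a b)" for x y a b
  proof -
    have "pair (brg (coad a x) (\<phi> y)) b = - pair x (brd (\<psi> a) (ad y b))"
      by (simp add: pair_brg_\<phi> pair_coad)
    moreover have "pair (brg (\<phi> x) (coad a y)) b = pair y (brd (\<psi> a) (ad x b))"
      by (subst hom_lie_skew[OF hom_lie_g]) (simp add: pair_vneg_left pair_brg_\<phi> pair_coad)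
    ultimately show ?thesis
      by (simp add: pair_simps pair_coad_\<phi> ad_Delta_pairing_def)
  qed
  show ?thesis
    unfolding cocycle_identity_def
    by (simp only: eq_iff_pair_left lhs rhs neg_equal_iff_equal)
qed

lemma pair_brd_skew: "pair x (brd a b) = - pair x (brd b a)"
  by (subst hom_lie_skew[OF hom_lie_d]) (simp add: pair_vneg_right)

lemma ad_condition_iff:
  "(\<forall>x a b. ad (\<phi> x) (brd a b) =
      vsub (vadd (vadd (brd (ad x a) (\<psi> b)) (brd (\<psi> a) (ad x b))) (ad (coad b x) (\<psi> a)))
           (ad (coad a x) (\<psi> b)))
   \<longleftrightarrow> cocycle_identity"
proof -
  have lhs: "pair y (ad (\<phi> x) (brd a b)) = - pair (brg x y) (brd a b)" for x y a b
    using bilin_g involutive_g by (rule pair_ad_circ_phi)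
  have ad_coad: "pair y (ad (coad c x) (\<psi> a)) = - pair x (brd (ad y a) (\<psi> c))" for x y a c
    by (simp add: pair_ad_\<psi> pair_brg_\<phi> pair_coad pair_brd_skew[of x "\<psi> c"])
  have rhs: "pair y (vsub (vadd (vadd (brd (ad x a) (\<psi> b)) (brd (\<psi> a) (ad x b)))
                                 (ad (coad b x) (\<psi> a)))
                           (ad (coad a x) (\<psi> b)))
      = - (ad_Delta_pairing x y a b - ad_Delta_pairing y x a b)" for x y a b
    by (simp add: pair_simps ad_coad pair_brd_skew[of x "ad y b"] ad_Delta_pairing_def)
  show ?thesis
    unfolding cocycle_identity_def
    by (simp only: eq_iff_pair_right lhs rhs neg_equal_iff_equal) blast
qed

end

theorem theorem3p7:
  fixes brg :: "('i::finite \<Rightarrow> 'k::field) \<Rightarrow> ('i \<Rightarrow> 'k) \<Rightarrow> ('i \<Rightarrow> 'k)"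
    and \<phi> :: "('i \<Rightarrow> 'k) \<Rightarrow> ('i \<Rightarrow> 'k)"
    and brd :: "('i \<Rightarrow> 'k) \<Rightarrow> ('i \<Rightarrow> 'k) \<Rightarrow> ('i \<Rightarrow> 'k)"
  assumes "hom_lie brg \<phi>" and "weakly_involutive brg \<phi>"
    and "hom_lie brd (dual_map \<phi>)" and "weakly_involutive brd (dual_map \<phi>)"
  shows "matched_pair brg \<phi> brd (dual_map \<phi>) (ad_circ brg \<phi>) (ad_circ_dual brd \<phi>)
     \<longleftrightarrow> (\<forall>x y. Delta brd (brg x y) =
            (\<lambda>p. ad_tensor brg \<phi> (\<phi> x) (Delta brd y) p - ad_tensor brg \<phi> (\<phi> y) (Delta brd x) p))"
proof -
  interpret dual_hom_lie_pair brg \<phi> brd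
    using assms by unfold_locales
  show ?thesis
    unfolding matched_pair_def Delta_cocycle_iff coad_condition_iff ad_condition_iff
    using hom_lie_g hom_lie_d hom_rep_ad hom_rep_coad by blast
qed

end
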